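(* With $\overline F_1$, $p$, $\beta$ as in the context, let $h:\overline F_1\to\overline F_1$ be the left $\mathrm{As}$-module map of degree $-1$ defined on free generators by $(\mathsf f_{i_1}\otimes\dots\otimes\mathsf f_{i_{k-1}}\otimes\mathsf f_{1})m^{(k)}.h=(\mathsf f_{i_1}\otimes\dots\otimes\mathsf f_{i_{k-2}}\otimes\mathsf f_{i_{k-1}+1})m^{(k-1)}$ if $k>1$, and $h=0$ on all other generators (those with $k=1$ or with last index $i_k\neq1$). Let $N=1-p\beta+h\partial+\partial h$ (diagrammatic composition). Then $N$ is a left $\mathrm{As}$-module map with $\mathsf f_n.N=0$ for all $n\ge1$, and for $k>1$: (i) $(\mathsf f_{i_1}\otimes\dots\otimes\mathsf f_{i_k})m^{(k)}.N=0$ if $i_k>2$; (ii) $(\mathsf f_{i_1}\otimes\dots\otimes\mathsf f_{i_{k-1}}\otimes\mathsf f_2)m^{(k)}.N=(1^{\otimes(i_1+\dots+i_{k-1})}\otimes m)(\mathsf f_{i_1}\otimes\dots\otimes\mathsf f_{i_{k-2}}\otimes\mathsf f_{i_{k-1}+1})m^{(k-1)}$; (iii) $(\mathsf f_{i_1}\otimes\dots\otimes\mathsf f_{i_{k-1}}\otimes\mathsf f_1)m^{(k)}.N=(1^{\otimes(i_1+\dots+i_{k-1}-1)}\otimes m)(\mathsf f_{i_1}\otimes\dots\otimes\mathsf f_{i_{k-1}})m^{(k-1)}$ if $i_{k-1}>1$; (iv) $(\mathsf f_{i_1}\otimes\dots\otimes\mathsf f_{i_{k-2}}\otimes\mathsf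 f_1\otimes\mathsf f_1)m^{(k)}.N=(1^{\otimes(i_1+\dots+i_{k-2})}\otimes m)(\mathsf f_{i_1}\otimes\dots\otimes\mathsf f_{i_{k-2}}\otimes\mathsf f_1)m^{(k-1)}$ if $(i_1,\dots,i_{k-2})\neq(1,\dots,1)$; (v) $\mathsf f_1^{\otimes k}m^{(k)}.N=(1^{\otimes(k-2)}\otimes m)\mathsf f_1^{\otimes(k-1)}m^{(k-1)}-m^{(k)}\mathsf f_1$. Consequently, if $\overline F_1^{(q)}$ denotes the left $\mathrm{As}$-submodule generated by the $(\mathsf f_{i_1}\otimes\dots\otimes\mathsf f_{i_k})m^{(k)}$ with $k\le q$ ($\overline F_1^{(0)}=0$), then $\overline F_1^{(q)}.N\subset\overline F_1^{(q-1)}$.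
   Context: $\Bbbk$ a commutative ring; Koszul signs; maps are applied on the right ($x.f$) and composed in diagrammatic order. $\mathrm{As}$ is the dg-operad with $\mathrm{As}(0)=0$, $\mathrm{As}(n)=\Bbbk m^{(n)}$ ($n\ge1$, degree 0), $m^{(1)}=1$ the unit, $m=m^{(2)}$, $(m^{(n_1)}\otimes\dots\otimes m^{(n_k)})m^{(k)}=m^{(n_1+\dots+n_k)}$. Left action of operad elements on a bimodule element $x$ of arity $k$ is written $(a_1\otimes\dots\otimes a_k)x$, right action $(x_1\otimes\dots\otimes x_k)b$. $\overline F_1=\mathrm{As}\odot\Bbbk\{\mathsf f_n\mid n\ge1\}\odot\mathrm{As}$ is the free $\mathrm{As}$-bimodule on $\mathsf f_n$ (arity $n$, degree $1-n$) with differential $\mathsf f_k\partial=\sum_{r+2+t=k}(-1)^t(1^{\otimes r}\otimes m\otimes1^{\otimes t})\mathsf f_{k-1}+\sum_{i+j=k,\ i,j\ge1}(-1)^j(\mathsf f_i\otimes\mathsf f_j)m$; as a left $\mathrm{As}$-module it is free on the elements $(\mathsf f_{i_1}\otimes\dots\otimes\mathsf f_{i_k})m^{(k)}$, $k\ge1$. $p:\overline F_1\to\mathrm{As}$ is the bimodule map with $\mathsf f_1\mapsto m^{(1)}$, $\mathsf f_n\mapsto0$ ($n\ge2$), so $(\mathsf f_{i_1}\otimes\dots\otimes\mathsf f_{i_k})m^{(k)}.p=m^{(k)}$ if all $i_s=1$ and $0$ otherwise; $\beta:\mathrm{As}\to\overline F_1$ is the left $\mathrm{As}$-module map $m^{(1)}\mapsto\mathsf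 f_1$. *)

theory Defs
  imports Main "HOL-Library.Poly_Mapping"
begin

text \<open>
Concrete model of the free As-bimodule F1 = As (.) k{f_n} (.) As.
As a left As-module it is free on the generators (f_i1 (x) ... (x) f_ik) m^(k);
since As(n) = k m^(n), a k-basis of F1 consists of the elements
  (m^(n_1) (x) ... (x) m^(n_I)) (f_i1 (x) ... (x) f_ik) m^(k),
I = i_1 + ... + i_k, encoded as the pair (ns, is) with ns = [n_1,...,n_I],
is = [i_1,...,i_k].  Elements of F1 are finitely supported k-valued functions
on such pairs; elements of As are finitely supported functions on arities
(As(n) = k m^(n)).
\<close>

type_synonym fbasis = "nat list \<times> nat list"
type_synonym 'k F1 = "fbasis \<Rightarrow>\<^sub>0 'k"
type_synonym 'k As = "nat \<Rightarrow>\<^sub>0 'k"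

definition valid_basis :: "fbasis \<Rightarrow> bool" where
  "valid_basis b = (snd b \<noteq> [] \<and> (\<forall>i\<in>set (snd b). 1 \<le> i) \<and> (\<forall>n\<in>set (fst b). 1 \<le> n)
     \<and> length (fst b) = sum_list (snd b))"

definition in_F1 :: "('k::zero) F1 \<Rightarrow> bool" where
  "in_F1 x = (Poly_Mapping.keys x \<subseteq> {b. valid_basis b})"

definition arity :: "fbasis \<Rightarrow> nat" where
  "arity b = sum_list (fst b)"

definition smult :: "'k::comm_ring_1 \<Rightarrow> ('b \<Rightarrow>\<^sub>0 'k) \<Rightarrow> ('b \<Rightarrow>\<^sub>0 'k)" where
  "smult c x = Poly_Mapping.map ((*) c) x"

definition lin_ext :: "('b \<Rightarrow> ('c \<Rightarrow>\<^sub>0 'k::comm_ring_1)) \<Rightarrow> ('b \<Rightarrow>\<^sub>0 'k) \<Rightarrow> ('c \<Rightarrow>\<^sub>0 'k)" where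
  "lin_ext T x = (\<Sum>b\<in>Poly_Mapping.keys x. smult (Poly_Mapping.lookup x b) (T b))"

definition bv :: "'b \<Rightarrow> ('b \<Rightarrow>\<^sub>0 'k::comm_ring_1)" where
  "bv b = Poly_Mapping.single b 1"

definition gen :: "nat list \<Rightarrow> 'k::comm_ring_1 F1" where
  "gen is = bv (replicate (sum_list is) 1, is)"

text \<open>Left action of (m^(l_1) (x) ... (x) m^(l_n)) on the arity-n part:
 (m^(l)...)(m^(n_1) (x)...(x) m^(n_I)) g = (m^(sum of l over block 1) (x) ...) g\<close>
fun block_sums :: "nat list \<Rightarrow> nat list \<Rightarrow> nat list" where
  "block_sums ls [] = []"
| "block_sums ls (n # ns) = sum_list (take n ls) # block_sums (drop n ls) ns"

definition lact :: "nat list \<Rightarrow> 'k::comm_ring_1 F1 \<Rightarrow> 'k F1" where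
  "lact ls x = lin_ext (\<lambda>b. if arity b = length ls then bv (block_sums ls (fst b), snd b) else 0) x"

text \<open>merging positions p and p+1 of the left operad labels (effect of (1..m..1) acting)\<close>
definition merge_at :: "nat \<Rightarrow> nat list \<Rightarrow> nat list" where
  "merge_at p ns = take p ns @ [ns ! p + ns ! Suc p] @ drop (Suc (Suc p)) ns"

text \<open>As has zero differential and degree-0
 elements, so the left action commutes with d; on the right-action part d acts
 as a derivation with Koszul sign (maps applied on the right):
 (x_1 (x) ... (x) x_k).(1^{j} (x) d (x) 1^{k-j-1}) = (-1)^{|x_{j+1}|+...+|x_k|}(...x_j d...),
 and |f_i| = 1 - i, whose parity is that of i - 1.  The term (1^r (x) m (x) 1^t) f_{i-1}
 of f_i d (sign (-1)^t) merges two left labels; the term (f_a (x) f_b) m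
 (sign (-1)^b) splits the index i into a, b.\<close>
definition dbasis :: "fbasis \<Rightarrow> 'k::comm_ring_1 F1" where
  "dbasis b = (let ns = fst b; is = snd b in
     (\<Sum>j<length is. smult ((- 1) ^ sum_list (map (\<lambda>i. i - 1) (drop (Suc j) is)))
        ((\<Sum>r<is ! j - 1. smult ((- 1) ^ (is ! j - 2 - r))
              (bv (merge_at (sum_list (take j is) + r) ns, is[j := is ! j - 1])))
       + (\<Sum>a\<in>{1..<is ! j}. smult ((- 1) ^ (is ! j - a))
              (bv (ns, take j is @ [a, is ! j - a] @ drop (Suc j) is))))))"

definition dF :: "'k::comm_ring_1 F1 \<Rightarrow> 'k F1" where
  "dF x = lin_ext dbasis x"

text \<open>p : F1 -> As, bimodule map with f_1 |-> m^(1), f_n |-> 0 (n >= 2)\<close>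
definition pbasis :: "fbasis \<Rightarrow> 'k::comm_ring_1 As" where
  "pbasis b = (if (\<forall>i\<in>set (snd b). i = 1) then bv (sum_list (fst b)) else 0)"

definition pF :: "'k::comm_ring_1 F1 \<Rightarrow> 'k As" where
  "pF x = lin_ext pbasis x"

text \<open>beta : As -> F1, left module map with m^(1) |-> f_1, hence m^(n) |-> (m^(n)) f_1\<close>
definition betaF :: "'k::comm_ring_1 As \<Rightarrow> 'k F1" where
  "betaF a = lin_ext (\<lambda>n. bv ([n], [1])) a"

definition hbasis :: "fbasis \<Rightarrow> 'k::comm_ring_1 F1" where
  "hbasis b = (if 1 < length (snd b) \<and> last (snd b) = 1
      then bv (fst b, butlast (butlast (snd b)) @ [last (butlast (snd b)) + 1]) else 0)"

definition hF :: "'k::comm_ring_1 F1 \<Rightarrow> 'k F1" where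
  "hF x = lin_ext hbasis x"

definition NF :: "'k::comm_ring_1 F1 \<Rightarrow> 'k F1" where
  "NF x = x - betaF (pF x) + dF (hF x) + hF (dF x)"

text \<open>F1^(q): the left As-submodule generated by the generators with k <= q,
 i.e. the k-span of the basis elements (ns, is) with length is <= q.\<close>
definition F1_filt :: "nat \<Rightarrow> ('k::comm_ring_1) F1 set" where
  "F1_filt q = {x. \<forall>b\<in>Poly_Mapping.keys x. valid_basis b \<and> length (snd b) \<le> q}"

end

theory Submission
  imports Defs
begin

(*
  The map N = 1 - p beta + h d + d h is a combination of Bbbk-linear maps, so it is
  determined by its values on the Bbbk-basis (m^(n_1) (x) ... (x) m^(n_I)) (f_i1 (x) ... (x) f_ik) m^(k)
  of F1, encoded as pairs (ns, is).  The proof computes these values in closed form: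
  writing is = js @ [c],
    - c >= 2: only the last tensor factor of d(b) survives h; its splitting part
      contributes -b and its merging part contributes a term only if c = 2;
    - is = ks @ [a, 1]: d(h b) and h(d b) cancel on the first length ks factors, and the
      remaining two alternating sums telescope to a single merge term minus b;
    - is = [1]: d and h vanish and p beta(b) = b, so N(b) = 0.
  The result (lemma NF_bv) is that N(b) is the basis vector obtained by merging the last
  two left labels and lowering is, minus the correction p beta(b) when all i_s = 1.
  Every clause of the theorem follows from this closed form: left As-linearity because
  the left action only regroups left labels, which commutes with merging the last two;
  the filtration statement because lowering shortens is by one; and the explicit
  formulas (i)-(v) by specialising to the generators gen is.
*)

lemma lookup_smult [simp]: "Poly_Mapping.lookup (smult c x) k = c * Poly_Mapping.lookup x k"
  unfolding smult_def by transfer (simp add: when_def)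

lemma smult_add: "smult c (x + y) = smult c x + smult c y"
  by (rule poly_mapping_eqI) (simp add: lookup_add algebra_simps)

lemma smult_diff: "smult c (x - y) = smult c x - smult c y"
  by (rule poly_mapping_eqI) (simp add: lookup_minus algebra_simps)

lemma smult_zero [simp]: "smult c 0 = 0"
  by (rule poly_mapping_eqI) simp

lemma smult_0 [simp]: "smult 0 x = 0"
  by (rule poly_mapping_eqI) simp

lemma smult_1 [simp]: "smult 1 x = x"
  by (rule poly_mapping_eqI) simp

lemma smult_smult [simp]: "smult c (smult d x) = smult (c * d) x"
  by (rule poly_mapping_eqI) (simp add: algebra_simps)

lemma smult_neg1 [simp]: "smult (- 1) x = - x"
  by (rule poly_mapping_eqI) simp

lemma smult_minus_left: "smult (- c) x = - smult c x"
  by (rule poly_mapping_eqI) simp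

lemma smult_sum: "smult c (sum f A) = (\<Sum>a\<in>A. smult c (f a))"
  by (induction A rule: infinite_finite_induct) (simp_all add: smult_add)

lemma keys_smult: "Poly_Mapping.keys (smult c x) \<subseteq> Poly_Mapping.keys x"
  by (auto simp: in_keys_iff)

lemma expand_bv: "x = (\<Sum>b\<in>Poly_Mapping.keys x. smult (Poly_Mapping.lookup x b) (bv b))"
proof (rule poly_mapping_eqI)
  fix k
  have "(\<Sum>b\<in>Poly_Mapping.keys x. Poly_Mapping.lookup x b * (if b = k then 1 else 0))
      = (\<Sum>b\<in>Poly_Mapping.keys x. if b = k then Poly_Mapping.lookup x k else 0)"
    by (rule sum.cong) auto
  also have "\<dots> = Poly_Mapping.lookup x k"
    by (simp add: in_keys_iff)
  finally show "Poly_Mapping.lookup x k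
      = Poly_Mapping.lookup (\<Sum>b\<in>Poly_Mapping.keys x. smult (Poly_Mapping.lookup x b) (bv b)) k"
    by (simp add: lookup_sum bv_def lookup_single when_def)
qed

definition k_linear :: "(('b \<Rightarrow>\<^sub>0 'k::comm_ring_1) \<Rightarrow> ('c \<Rightarrow>\<^sub>0 'k)) \<Rightarrow> bool" where
  "k_linear F \<longleftrightarrow> (\<forall>x y. F (x + y) = F x + F y) \<and> (\<forall>c x. F (smult c x) = smult c (F x))"

lemma k_linear_expand:
  fixes F :: "('b \<Rightarrow>\<^sub>0 'k::comm_ring_1) \<Rightarrow> ('c \<Rightarrow>\<^sub>0 'k)"
  assumes "k_linear F"
  shows "F x = (\<Sum>b\<in>Poly_Mapping.keys x. smult (Poly_Mapping.lookup x b) (F (bv b)))"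
proof -
  have add: "F (x + y) = F x + F y" and hom: "F (smult c x) = smult c (F x)" for x y c
    using assms by (auto simp: k_linear_def)
  have "F (sum f A) = (\<Sum>a\<in>A. F (f a))" for f :: "'b \<Rightarrow> 'b \<Rightarrow>\<^sub>0 'k" and A :: "'b set"
  proof (induction A rule: infinite_finite_induct)
    case (infinite A)
    then show ?case using hom[of 0 0] by simp
  next
    case empty
    then show ?case using hom[of 0 0] by simp
  qed (simp add: add)
  then show ?thesis
    using arg_cong[where f = F, OF expand_bv[of x]] by (simp add: hom)
qed

lemma k_linear_eqI:
  assumes "k_linear F" "k_linear G" "\<And>b. b \<in> Poly_Mapping.keys x \<Longrightarrow> F (bv b) = G (bv b)"
  shows "F x = G x"
proof -
  have "F x = (\<Sum>b\<in>Poly_Mapping.keys x. smult (Poly_Mapping.lookup x b) (F (bv b)))"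
    by (rule k_linear_expand[OF assms(1)])
  also have "\<dots> = (\<Sum>b\<in>Poly_Mapping.keys x. smult (Poly_Mapping.lookup x b) (G (bv b)))"
    using assms(3) by simp
  also have "\<dots> = G x"
    by (rule k_linear_expand[OF assms(2), symmetric])
  finally show ?thesis .
qed

lemma k_linear_comp: "k_linear F \<Longrightarrow> k_linear G \<Longrightarrow> k_linear (\<lambda>x. G (F x))"
  by (simp add: k_linear_def)

lemma lin_ext_superset:
  assumes "finite S" "Poly_Mapping.keys x \<subseteq> S"
  shows "lin_ext T x = (\<Sum>b\<in>S. smult (Poly_Mapping.lookup x b) (T b))"
  unfolding lin_ext_def
  by (rule sum.mono_neutral_left) (use assms in \<open>auto simp: in_keys_iff\<close>)

lemma lin_ext_add: "lin_ext T (x + y) = lin_ext T x + lin_ext T y"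
proof -
  let ?S = "Poly_Mapping.keys x \<union> Poly_Mapping.keys y"
  have "lin_ext T (x + y) = (\<Sum>b\<in>?S. smult (Poly_Mapping.lookup (x + y) b) (T b))"
    by (rule lin_ext_superset) (auto dest: subsetD[OF keys_add])
  also have "\<dots> = (\<Sum>b\<in>?S. smult (Poly_Mapping.lookup x b) (T b))
                + (\<Sum>b\<in>?S. smult (Poly_Mapping.lookup y b) (T b))"
    unfolding sum.distrib[symmetric]
    by (rule sum.cong) (auto intro!: poly_mapping_eqI simp: lookup_add algebra_simps)
  also have "\<dots> = lin_ext T x + lin_ext T y"
    by (subst (1 2) lin_ext_superset[where S = ?S]) auto
  finally show ?thesis .
qed

lemma lin_ext_smult: "lin_ext T (smult c x) = smult c (lin_ext T x)"
proof -
  have "lin_ext T (smult c x)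
      = (\<Sum>b\<in>Poly_Mapping.keys x. smult (Poly_Mapping.lookup (smult c x) b) (T b))"
    by (rule lin_ext_superset) (auto simp: keys_smult[THEN subsetD])
  then show ?thesis
    unfolding lin_ext_def smult_sum by simp
qed

lemma k_linear_lin_ext: "k_linear (lin_ext T)"
  by (simp add: k_linear_def lin_ext_add lin_ext_smult)

lemma lin_ext_bv [simp]: "lin_ext T (bv b) = T b"
  by (simp add: lin_ext_def bv_def)

lemma lin_ext_zero [simp]: "lin_ext T 0 = 0"
  by (simp add: lin_ext_def)

lemma lin_ext_diff: "lin_ext T (x - y) = lin_ext T x - lin_ext T y"
  using lin_ext_add[of T x "- y"] lin_ext_smult[of T "- 1" y] by (simp add: smult_minus_left)

lemma lin_ext_sum: "lin_ext T (sum f A) = (\<Sum>a\<in>A. lin_ext T (f a))"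
  by (induction A rule: infinite_finite_induct) (simp_all add: lin_ext_add)

lemma hF_add: "hF (x + y) = hF x + hF y"
  by (simp add: hF_def lin_ext_add)

lemma hF_sum: "hF (sum f A) = (\<Sum>a\<in>A. hF (f a))"
  by (simp add: hF_def lin_ext_sum)

lemma hF_smult: "hF (smult c x) = smult c (hF x)"
  by (simp add: hF_def lin_ext_smult)

lemma hF_bv [simp]: "hF (bv b) = hbasis b" by (simp add: hF_def)
lemma dF_bv [simp]: "dF (bv b) = dbasis b" by (simp add: dF_def)
lemma pF_bv [simp]: "pF (bv b) = pbasis b" by (simp add: pF_def)
lemma betaF_bv [simp]: "betaF (bv n) = bv ([n], [1])" by (simp add: betaF_def)
lemma hF_zero [simp]: "hF 0 = 0" by (simp add: hF_def)
lemma dF_zero [simp]: "dF 0 = 0" by (simp add: dF_def)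
lemma betaF_zero [simp]: "betaF 0 = 0" by (simp add: betaF_def)

lemma k_linear_NF: "k_linear NF"
  by (simp add: k_linear_def NF_def pF_def betaF_def dF_def hF_def lin_ext_add lin_ext_smult
      smult_add smult_diff algebra_simps)

lemma lact_bv:
  "lact ls (bv b) = (if arity b = length ls then bv (block_sums ls (fst b), snd b) else 0)"
  by (simp add: lact_def)

lemma k_linear_lact: "k_linear (lact ls)"
  unfolding lact_def by (rule k_linear_lin_ext)

section \<open>Combinatorics of the left labels\<close>

text \<open>The left action of (1 (x) ... (x) 1 (x) m) on the left labels: merge the last two.\<close>

definition merge_last :: "nat list \<Rightarrow> nat list" where
  "merge_last ns = merge_at (length ns - 2) ns"

lemma merge_at_0 [simp]: "merge_at 0 (x # y # zs) = (x + y) # zs"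
  by (simp add: merge_at_def)

lemma merge_at_Suc [simp]: "merge_at (Suc p) (x # xs) = x # merge_at p xs"
  by (simp add: merge_at_def)

lemma merge_at_props:
  "Suc p < length ns \<Longrightarrow> sum_list (merge_at p ns) = sum_list ns
     \<and> length (merge_at p ns) = length ns - 1
     \<and> ((\<forall>n\<in>set ns. 1 \<le> n) \<longrightarrow> (\<forall>x\<in>set (merge_at p ns). 1 \<le> x))"
proof (induction p arbitrary: ns)
  case 0
  then obtain x y zs where "ns = x # y # zs" by (cases ns; cases "tl ns") auto
  then show ?case by auto
next
  case (Suc p)
  then obtain x xs where "ns = x # xs" by (cases ns) auto
  then show ?case using Suc by auto
qed

lemma merge_last_props:
  assumes "2 \<le> length ns"
  shows "sum_list (merge_last ns) = sum_list ns" "length (merge_last ns) = length ns - 1"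
    "\<forall>n\<in>set ns. 1 \<le> n \<Longrightarrow> \<forall>x\<in>set (merge_last ns). 1 \<le> x"
  using merge_at_props[of "length ns - 2" ns] assms by (simp_all add: merge_last_def)

lemma length_block_sums [simp]: "length (block_sums ls ns) = length ns"
  by (induction ls ns rule: block_sums.induct) auto

lemma sum_block_sums: "sum_list ns = length ls \<Longrightarrow> sum_list (block_sums ls ns) = sum_list ls"
proof (induction ls ns rule: block_sums.induct)
  case (2 ls n ns)
  then have "sum_list (block_sums (drop n ls) ns) = sum_list (drop n ls)" by simp
  then show ?case by (simp add: sum_list_append[symmetric])
qed simp

lemma block_sums_merge_at:
  "Suc p < length ns \<Longrightarrow> sum_list ns = length ls
     \<Longrightarrow> block_sums ls (merge_at p ns) = merge_at p (block_sums ls ns)"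
proof (induction p arbitrary: ns ls)
  case 0
  then obtain x y zs where ns: "ns = x # y # zs" by (cases ns; cases "tl ns") auto
  have "take (x + y) ls = take x ls @ take y (drop x ls)" by (simp add: take_add)
  then show ?case using ns by (simp add: add.commute drop_drop)
next
  case (Suc p)
  then obtain x xs where "ns = x # xs" by (cases ns) auto
  then show ?case using Suc by simp
qed

lemma block_sums_merge_last:
  "2 \<le> length ns \<Longrightarrow> sum_list ns = length ls
     \<Longrightarrow> block_sums ls (merge_last ns) = merge_last (block_sums ls ns)"
  by (simp add: merge_last_def block_sums_merge_at)

lemma block_sums_ones: "block_sums ls (replicate (length ls) 1) = ls"
  by (induction ls) simp_all

lemma merge_last_ones:
  assumes "2 \<le> n"
  shows "merge_last (replicate n (1::nat)) = replicate (n - 2) 1 @ [2]"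
proof -
  obtain p where n: "n = p + 2" using assms by (metis le_add_diff_inverse2)
  have "merge_at p (replicate (p + 2) (1::nat)) = replicate p 1 @ [2]"
    by (induction p) (auto simp: numeral_2_eq_2)
  then show ?thesis by (simp add: n merge_last_def)
qed

lemma sum_list_ones [simp]: "sum_list (replicate n (Suc 0)) = n"
  by (induction n) auto

lemma split_last_two: "\<not> length is < 2 \<Longrightarrow> \<exists>bs y c. is = bs @ [y, c]"
proof (induction "is" rule: rev_induct)
  case (snoc c xs)
  then show ?case by (cases xs rule: rev_exhaust) auto
qed simp

lemma length_le_sum_list: "\<forall>i\<in>set is. 1 \<le> i \<Longrightarrow> length is \<le> sum_list (is :: nat list)"
  by (induction "is") auto

section \<open>The differential, factor by factor\<close>

definition dsign :: "nat list \<Rightarrow> nat \<Rightarrow> 'k::comm_ring_1" where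
  "dsign is j = (-1) ^ sum_list (map (\<lambda>i. i - 1) (drop (Suc j) is))"

definition dmerge :: "nat list \<Rightarrow> nat list \<Rightarrow> nat \<Rightarrow> nat \<Rightarrow> 'k::comm_ring_1 F1" where
  "dmerge ns is j r = smult ((- 1) ^ (is ! j - 2 - r))
     (bv (merge_at (sum_list (take j is) + r) ns, is[j := is ! j - 1]))"

definition dsplit :: "nat list \<Rightarrow> nat list \<Rightarrow> nat \<Rightarrow> nat \<Rightarrow> 'k::comm_ring_1 F1" where
  "dsplit ns is j a = smult ((- 1) ^ (is ! j - a))
     (bv (ns, take j is @ [a, is ! j - a] @ drop (Suc j) is))"

definition dfactor :: "nat list \<Rightarrow> nat list \<Rightarrow> nat \<Rightarrow> 'k::comm_ring_1 F1" where
  "dfactor ns is j = smult (dsign is j)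
     ((\<Sum>r<is ! j - 1. dmerge ns is j r) + (\<Sum>a\<in>{1..<is ! j}. dsplit ns is j a))"

lemma dbasis_factors: "dbasis (ns, is) = (\<Sum>j<length is. dfactor ns is j)"
  by (simp add: dbasis_def dfactor_def dmerge_def dsplit_def dsign_def Let_def)

lemma hF_dfactor: "hF (dfactor ns is j) = smult (dsign is j)
   ((\<Sum>r<is ! j - 1. smult ((- 1) ^ (is ! j - 2 - r))
       (hbasis (merge_at (sum_list (take j is) + r) ns, is[j := is ! j - 1])))
  + (\<Sum>a\<in>{1..<is ! j}. smult ((- 1) ^ (is ! j - a))
       (hbasis (ns, take j is @ [a, is ! j - a] @ drop (Suc j) is))))"
  by (simp add: dfactor_def dmerge_def dsplit_def hF_add hF_sum hF_smult)

lemma hbasis_not_one: "last is \<noteq> 1 \<Longrightarrow> hbasis (ns, is) = 0"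
  by (simp add: hbasis_def)

lemma hbasis_snoc2: "hbasis (ns, L @ [a, b]) = (if b = 1 then bv (ns, L @ [a + 1]) else 0)"
  by (simp add: hbasis_def butlast_append)

lemma hbasis_snoc3: "hbasis (ns, L @ [x, y, b]) = (if b = 1 then bv (ns, L @ [x, y + 1]) else 0)"
  by (simp add: hbasis_def butlast_append)

lemma hbasis_mid:
  "hbasis (ns, L @ x # y # M @ [a, b]) = (if b = 1 then bv (ns, L @ x # y # M @ [a + 1]) else 0)"
  by (simp add: hbasis_def butlast_append)

section \<open>Telescoping alternating sums\<close>

text \<open>The merging terms of d(h b) and h(d b) overlap with opposite signs except the last one.\<close>

lemma alternating_sum_merge:
  "(\<Sum>r<Suc n. smult ((-1::'k::comm_ring_1) ^ (n - r)) (f r))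
     + (\<Sum>r<n. smult ((-1) ^ (n - 1 - r)) (f r)) = f n"
proof -
  have "smult ((-1::'k) ^ (n - r)) (f r) = - smult ((-1) ^ (n - 1 - r)) (f r)" if "r < n" for r
  proof -
    from that have "n - r = Suc (n - 1 - r)" by arith
    then show ?thesis by (simp add: smult_minus_left)
  qed
  then have "(\<Sum>r<n. smult ((-1::'k) ^ (n - r)) (f r)) = - (\<Sum>r<n. smult ((-1) ^ (n - 1 - r)) (f r))"
    by (simp add: sum_negf[symmetric])
  then show ?thesis by simp
qed

lemma alternating_sum_split:
  assumes "1 \<le> m"
  shows "(\<Sum>x\<in>{1..<Suc m}. smult ((-1::'k::comm_ring_1) ^ (Suc m - x)) (P x))
     + (\<Sum>x\<in>{1..<m}. smult ((-1) ^ (m - x)) (P x)) = - P m"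
proof -
  have "smult ((-1::'k) ^ (Suc m - x)) (P x) = - smult ((-1) ^ (m - x)) (P x)" if "x \<in> {1..<m}" for x
  proof -
    from that have "Suc m - x = Suc (m - x)" by auto
    then show ?thesis by (simp add: smult_minus_left)
  qed
  then have "(\<Sum>x\<in>{1..<m}. smult ((-1::'k) ^ (Suc m - x)) (P x))
      = - (\<Sum>x\<in>{1..<m}. smult ((-1) ^ (m - x)) (P x))"
    by (simp add: sum_negf[symmetric])
  moreover have "{1..<Suc m} = insert m {1..<m}" using assms by auto
  ultimately show ?thesis by (simp add: smult_minus_left)
qed

section \<open>N on basis vectors\<close>

text \<open>Last index c >= 2: h and p vanish on b, and of h(d b) only the last tensor factor
  survives; its splitting part gives -b and its merging part the merge term if c = 2.\<close>

lemma NF_last_ge2: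
  assumes c: "2 \<le> c"
  shows "NF (bv (ns, js @ [c]) :: 'k::comm_ring_1 F1) =
    (if c = 2 \<and> js \<noteq> [] then bv (merge_at (sum_list js) ns, butlast js @ [last js + 1]) else 0)"
    (is "_ = ?R")
proof -
  let ?is = "js @ [c]"
  have front: "hF (dfactor ns ?is j) = (0::'k F1)" if j: "j < length js" for j
  proof -
    have "hbasis (merge_at (sum_list (take j ?is) + r) ns, ?is[j := ?is ! j - 1]) = (0::'k F1)" for r
      using j c by (intro hbasis_not_one) (simp add: list_update_append1)
    moreover have "hbasis (ns, take j ?is @ [a, ?is ! j - a] @ drop (Suc j) ?is) = (0::'k F1)" for a
      using j c by (intro hbasis_not_one) simp
    ultimately show ?thesis by (simp add: hF_dfactor)
  qed
  have merging: "(\<Sum>r<c - 1. smult ((- 1) ^ (c - 2 - r))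
        (hbasis (merge_at (sum_list js + r) ns, js @ [c - 1]))) = (?R :: 'k F1)"
  proof (cases "c = 2")
    case True
    then show ?thesis by (cases "js = []") (simp_all add: hbasis_def)
  next
    case False
    then show ?thesis using c by (simp add: hbasis_not_one)
  qed
  have "(\<Sum>a\<in>{1..<c}. smult ((- 1) ^ (c - a)) (hbasis (ns, js @ [a, c - a])))
      = (\<Sum>a\<in>{1..<c}. if a = c - 1 then - (bv (ns, ?is) :: 'k F1) else 0)"
    by (rule sum.cong) (auto simp: hbasis_snoc2 smult_minus_left)
  also have "\<dots> = - bv (ns, ?is)" using c by (auto simp: sum.delta')
  finally have splitting: "(\<Sum>a\<in>{1..<c}. smult ((- 1) ^ (c - a)) (hbasis (ns, js @ [a, c - a])))
      = - (bv (ns, ?is) :: 'k F1)" .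
  have last: "hF (dfactor ns ?is (length js)) = ?R - bv (ns, ?is)"
    using merging splitting by (simp add: hF_dfactor dsign_def nth_append)
  have "hF (dF (bv (ns, ?is))) = (\<Sum>j<length js. hF (dfactor ns ?is j)) + hF (dfactor ns ?is (length js))"
    by (simp add: dbasis_factors hF_add hF_sum)
  also have "\<dots> = ?R - bv (ns, ?is)" using front last by simp
  finally show ?thesis
    using c by (simp add: NF_def hbasis_not_one pbasis_def)
qed

text \<open>For b = (ns, ks @ [a, 1]): on each of the first length ks factors, h(d b) is
  exactly minus the corresponding factor of d(h b), so they cancel.\<close>

lemma hF_dfactor_front:
  assumes a: "1 \<le> a" and j: "j < length ks"
  shows "hF (dfactor ns (ks @ [a, 1]) j) = - (dfactor ns (ks @ [a + 1]) j :: 'k::comm_ring_1 F1)"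
proof -
  let ?is = "ks @ [a, 1]" and ?is' = "ks @ [a + 1]"
  have merging: "hbasis (merge_at (sum_list (take j ?is) + r) ns, ?is[j := ?is ! j - 1])
     = (bv (merge_at (sum_list (take j ?is') + r) ns, ?is'[j := ?is' ! j - 1]) :: 'k F1)" for r
    using j by (simp add: list_update_append1 nth_append hbasis_snoc2)
  have splitting: "hbasis (ns, take j ?is @ [x, ?is ! j - x] @ drop (Suc j) ?is)
     = (bv (ns, take j ?is' @ [x, ?is' ! j - x] @ drop (Suc j) ?is') :: 'k F1)" for x
    using j by (simp add: nth_append hbasis_mid)
  have same_index: "?is ! j = ?is' ! j" using j by (simp add: nth_append)
  have sign_flip: "dsign ?is j = - (dsign ?is' j :: 'k)"
  proof -
    obtain a' where "a = Suc a'" using a by (cases a) auto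
    moreover have "Suc j - length ks = 0" using j by simp
    ultimately show ?thesis by (simp add: dsign_def)
  qed
  show ?thesis
    unfolding hF_dfactor merging splitting
    unfolding same_index sign_flip dfactor_def dmerge_def dsplit_def smult_minus_left ..
qed

text \<open>The factor f_1 itself has zero differential.\<close>

lemma hF_dfactor_one: "hF (dfactor ns (ks @ [a, 1]) (Suc (length ks))) = (0 :: 'k::comm_ring_1 F1)"
  unfolding hF_dfactor by (simp add: nth_append)

text \<open>On the factor f_a the two alternating sums telescope to one merge term minus b.\<close>

lemma dfactor_telescope:
  assumes a: "1 \<le> a"
  shows "dfactor ns (ks @ [a + 1]) (length ks) + hF (dfactor ns (ks @ [a, 1]) (length ks))
     = bv (merge_at (sum_list ks + a - 1) ns, ks @ [a]) - (bv (ns, ks @ [a, 1]) :: 'k::comm_ring_1 F1)"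
proof -
  obtain a' where a': "a = Suc a'" using a by (cases a) auto
  define Mf :: "nat \<Rightarrow> 'k F1" where "Mf r = bv (merge_at (sum_list ks + r) ns, ks @ [Suc a'])" for r
  define Pf :: "nat \<Rightarrow> 'k F1" where "Pf x = bv (ns, ks @ [x, Suc (Suc a') - x])" for x
  have d_part: "dfactor ns (ks @ [a + 1]) (length ks) = (\<Sum>r<Suc a'. smult ((-1) ^ (a' - r)) (Mf r))
      + (\<Sum>x\<in>{1..<Suc (Suc a')}. smult ((-1) ^ (Suc (Suc a') - x)) (Pf x))"
  proof -
    have "(\<Sum>r<Suc a'. dmerge ns (ks @ [a + 1]) (length ks) r)
        = (\<Sum>r<Suc a'. smult ((-1) ^ (a' - r)) (Mf r))"
      by (rule sum.cong) (auto simp: dmerge_def Mf_def a' nth_append numeral_2_eq_2)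
    moreover have "(\<Sum>x\<in>{1..<Suc (Suc a')}. dsplit ns (ks @ [a + 1]) (length ks) x)
        = (\<Sum>x\<in>{1..<Suc (Suc a')}. smult ((-1) ^ (Suc (Suc a') - x)) (Pf x))"
      by (rule sum.cong) (auto simp: dsplit_def Pf_def a' nth_append)
    ultimately show ?thesis by (simp add: dfactor_def dsign_def a' nth_append)
  qed
  have hd_part: "hF (dfactor ns (ks @ [a, 1]) (length ks)) = (\<Sum>r<a'. smult ((-1) ^ (a' - 1 - r)) (Mf r))
      + (\<Sum>x\<in>{1..<Suc a'}. smult ((-1) ^ (Suc a' - x)) (Pf x))"
  proof -
    have "(\<Sum>r<a'. smult ((- 1) ^ (Suc a' - 2 - r)) (hbasis (merge_at (sum_list ks + r) ns, ks @ [a', 1])))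
        = (\<Sum>r<a'. smult ((-1) ^ (a' - 1 - r)) (Mf r) :: 'k F1)"
      by (rule sum.cong) (auto simp: Mf_def hbasis_snoc2 numeral_2_eq_2)
    moreover have "(\<Sum>x\<in>{1..<Suc a'}. smult ((- 1) ^ (Suc a' - x)) (hbasis (ns, ks @ [x, Suc a' - x, 1])))
        = (\<Sum>x\<in>{1..<Suc a'}. smult ((-1) ^ (Suc a' - x)) (Pf x) :: 'k F1)"
      by (rule sum.cong) (auto simp: Pf_def hbasis_snoc3 Suc_diff_le)
    ultimately show ?thesis by (simp add: hF_dfactor dsign_def a' nth_append)
  qed
  have "dfactor ns (ks @ [a + 1]) (length ks) + hF (dfactor ns (ks @ [a, 1]) (length ks)) = Mf a' - Pf (Suc a')"
    unfolding d_part hd_part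
    using alternating_sum_merge[of a' Mf] alternating_sum_split[of "Suc a'" Pf]
    by (simp add: algebra_simps)
  then show ?thesis by (simp add: Mf_def Pf_def a')
qed

lemma NF_last_one:
  assumes a: "1 \<le> a"
  shows "NF (bv (ns, ks @ [a, 1]) :: 'k::comm_ring_1 F1) = bv (merge_at (sum_list ks + a - 1) ns, ks @ [a])
     - (if \<forall>i\<in>set (ks @ [a, 1]). i = 1 then bv ([sum_list ns], [1]) else 0)"
    (is "_ = _ - ?P")
proof -
  let ?is = "ks @ [a, 1]" and ?is' = "ks @ [a + 1]"
  have p_beta: "betaF (pF (bv (ns, ?is))) = (?P :: 'k F1)"
    by (simp add: pbasis_def)
  have d_h: "dF (hF (bv (ns, ?is))) = (\<Sum>j<length ks. dfactor ns ?is' j) + (dfactor ns ?is' (length ks) :: 'k F1)"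
    by (simp add: hbasis_snoc2 dbasis_factors)
  have h_d: "hF (dF (bv (ns, ?is) :: 'k F1))
      = - (\<Sum>j<length ks. dfactor ns ?is' j) + hF (dfactor ns ?is (length ks))"
  proof -
    have "dbasis (ns, ?is) = (\<Sum>j<length ks. dfactor ns ?is j) + dfactor ns ?is (length ks)
        + (dfactor ns ?is (Suc (length ks)) :: 'k F1)"
      by (simp add: dbasis_factors)
    then have "hF (dF (bv (ns, ?is) :: 'k F1))
        = (\<Sum>j<length ks. hF (dfactor ns ?is j)) + hF (dfactor ns ?is (length ks))"
      by (simp only: dF_bv hF_add hF_sum hF_dfactor_one add_0_right)
    also have "(\<Sum>j<length ks. hF (dfactor ns ?is j)) = (\<Sum>j<length ks. - dfactor ns ?is' j :: 'k F1)"
      by (rule sum.cong) (use hF_dfactor_front[OF a] in auto)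
    finally show ?thesis by (simp add: sum_negf)
  qed
  have "NF (bv (ns, ?is) :: 'k F1)
      = bv (ns, ?is) - ?P + (dfactor ns ?is' (length ks) + hF (dfactor ns ?is (length ks)))"
    unfolding NF_def p_beta d_h h_d by (simp add: algebra_simps)
  then show ?thesis
    unfolding dfactor_telescope[OF a] by simp
qed

text \<open>A single factor f_1: d and h vanish, and p beta(b) = b since ns has one entry.\<close>

lemma NF_single_one: "NF (bv ([n], [1]) :: 'k::comm_ring_1 F1) = 0"
proof -
  have "dbasis ([n], [1]) = (0 :: 'k F1)" by (simp add: dbasis_factors dfactor_def)
  moreover have "hbasis ([n], [1]) = (0 :: 'k F1)" by (simp add: hbasis_def)
  ultimately show ?thesis by (simp add: NF_def pbasis_def)
qed

text \<open>The closed form of N on a basis vector (ns, is): merge the last two left labels and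
  lower is (f_y (x) f_2 becomes f_(y+1), a trailing f_1 is dropped), subtracting
  p beta(b) = (m^(|ns|)) f_1 when all indices are 1.\<close>

definition N_basis :: "nat list \<Rightarrow> nat list \<Rightarrow> 'k::comm_ring_1 F1" where
  "N_basis ns is =
     (if length is < 2 then 0
      else if last is = 2 then bv (merge_last ns, butlast (butlast is) @ [last (butlast is) + 1])
      else if last is = 1 then bv (merge_last ns, butlast is)
        - (if \<forall>i\<in>set is. i = 1 then bv ([sum_list ns], [1]) else 0)
      else 0)"

lemma NF_bv:
  assumes "is \<noteq> []" "\<forall>i\<in>set is. 1 \<le> i" "length ns = sum_list is"
  shows "NF (bv (ns, is)) = (N_basis ns is :: 'k::comm_ring_1 F1)"
proof -
  obtain js c where is_split: "is = js @ [c]" using assms(1) by (cases "is" rule: rev_exhaust) auto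
  consider "2 \<le> c" | "c = 1" "js = []" | ks a where "c = 1" "js = ks @ [a]"
    using assms(2) is_split by (cases js rule: rev_exhaust) force+
  then show ?thesis
  proof cases
    case 1
    have "merge_at (sum_list js) ns = merge_last ns" if "c = 2"
      using assms(3) is_split that by (simp add: merge_last_def)
    then show ?thesis
      using 1 is_split by (auto simp: NF_last_ge2 N_basis_def butlast_append)
  next
    case 2
    then obtain n where "ns = [n]"
      using assms(3) is_split by (cases ns) auto
    then show ?thesis using 2 is_split by (simp add: NF_single_one[simplified] N_basis_def)
  next
    case 3
    have "1 \<le> a" using assms(2) is_split 3 by simp
    moreover have "merge_at (sum_list ks + a - 1) ns = merge_last ns"
      using assms(3) is_split 3 \<open>1 \<le> a\<close> by (simp add: merge_last_def)
    ultimately show ?thesis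
      using is_split 3 NF_last_one[of a ns ks] by (simp add: N_basis_def butlast_append)
  qed
qed

lemma N_basis_snoc2:
  "N_basis ns (bs @ [y, c]) =
     (if c = 2 then bv (merge_last ns, bs @ [y + 1])
      else if c = 1 then bv (merge_last ns, bs @ [y])
        - (if \<forall>i\<in>set (bs @ [y, c]). i = 1 then bv ([sum_list ns], [1]) else 0)
      else 0)"
  by (simp add: N_basis_def butlast_append)

lemma N_basis_short: "length is < 2 \<Longrightarrow> N_basis ns is = 0"
  by (simp add: N_basis_def)

lemma lact_diff: "lact ls (x - y) = lact ls x - lact ls y"
  by (simp add: lact_def lin_ext_diff)

lemma lact_zero [simp]: "lact ls 0 = 0"
  by (simp add: lact_def)

lemma lact_N_basis:
  assumes "\<forall>i\<in>set is. 1 \<le> i" "length ns = sum_list is" "sum_list ns = length ls"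
  shows "lact ls (N_basis ns is) = (N_basis (block_sums ls ns) is :: 'k::comm_ring_1 F1)"
proof (cases "length is < 2")
  case False
  then obtain bs y c where is_split: "is = bs @ [y, c]" using split_last_two by blast
  have ns2: "2 \<le> length ns" using False assms(1,2) length_le_sum_list[of "is"] by simp
  have lact_merge: "lact ls (bv (merge_last ns, is')) = (bv (merge_last (block_sums ls ns), is') :: 'k F1)"
    for is'
    using ns2 assms(3) by (simp add: lact_bv arity_def merge_last_props block_sums_merge_last)
  have lact_single: "lact ls (bv ([sum_list ns], [1])) = (bv ([sum_list (block_sums ls ns)], [1]) :: 'k F1)"
    using assms(3) by (simp add: lact_bv arity_def sum_block_sums)
  show ?thesis
    unfolding is_split N_basis_snoc2 using lact_single by (simp add: lact_diff lact_merge)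
qed (simp add: N_basis_short)

theorem NF_lact:
  assumes "in_F1 x" "\<forall>b\<in>Poly_Mapping.keys x. arity b = length ls"
  shows "NF (lact ls x) = lact ls (NF x :: 'k::comm_ring_1 F1)"
proof (rule k_linear_eqI[where F = "\<lambda>x. NF (lact ls x)" and G = "\<lambda>x. lact ls (NF x)"])
  show "k_linear (\<lambda>x. NF (lact ls x :: 'k F1))" "k_linear (\<lambda>x. lact ls (NF x :: 'k F1))"
    by (simp_all add: k_linear_comp k_linear_NF k_linear_lact)
next
  fix b assume b: "b \<in> Poly_Mapping.keys x"
  obtain ns "is" where b_eq: "b = (ns, is)" by fastforce
  have valid: "is \<noteq> []" "\<forall>i\<in>set is. 1 \<le> i" "length ns = sum_list is"
    using assms(1) b by (auto simp: in_F1_def valid_basis_def b_eq)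
  have "arity b = length ls" using assms(2) b by blast
  then have ar: "sum_list ns = length ls" by (simp add: arity_def b_eq)
  have "NF (lact ls (bv b)) = (N_basis (block_sums ls ns) is :: 'k F1)"
    using valid ar by (simp add: lact_bv arity_def b_eq NF_bv)
  also have "\<dots> = lact ls (NF (bv b))"
    using valid ar by (simp add: b_eq NF_bv lact_N_basis)
  finally show "NF (lact ls (bv b)) = lact ls (NF (bv b) :: 'k F1)" .
qed

lemma filt_zero [simp]: "0 \<in> F1_filt q"
  by (simp add: F1_filt_def)

lemma filt_add: "x \<in> F1_filt q \<Longrightarrow> y \<in> F1_filt q \<Longrightarrow> x + y \<in> F1_filt q"
  using keys_add by (fastforce simp: F1_filt_def)

lemma filt_diff: "x \<in> F1_filt q \<Longrightarrow> y \<in> F1_filt q \<Longrightarrow> x - y \<in> F1_filt q"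
  using keys_diff by (fastforce simp: F1_filt_def)

lemma filt_smult: "x \<in> F1_filt q \<Longrightarrow> smult c x \<in> F1_filt q"
  using keys_smult by (fastforce simp: F1_filt_def)

lemma filt_sum: "(\<And>a. a \<in> A \<Longrightarrow> f a \<in> F1_filt q) \<Longrightarrow> sum f A \<in> F1_filt q"
  by (induction A rule: infinite_finite_induct) (simp_all add: filt_add)

lemma filt_bv: "valid_basis b \<Longrightarrow> length (snd b) \<le> q \<Longrightarrow> bv b \<in> F1_filt q"
  by (simp add: F1_filt_def bv_def)

lemma filt_mono: "q \<le> q' \<Longrightarrow> F1_filt q \<subseteq> F1_filt q'"
  by (auto simp: F1_filt_def)

text \<open>Every term of the closed form has one tensor factor f_i fewer than b.\<close>

lemma N_basis_filt:
  assumes "valid_basis (ns, is)"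
  shows "N_basis ns is \<in> (F1_filt (length is - 1) :: 'k::comm_ring_1 F1 set)"
proof (cases "length is < 2")
  case False
  then obtain bs y c where is_split: "is = bs @ [y, c]" using split_last_two by blast
  have pos: "\<forall>i\<in>set is. 1 \<le> i" "\<forall>n\<in>set ns. 1 \<le> n" and len: "length ns = sum_list is"
    using assms by (auto simp: valid_basis_def)
  have ns2: "2 \<le> length ns" using False pos(1) len length_le_sum_list[of "is"] by simp
  note merged = merge_last_props[OF ns2]
  have "c = 2 \<Longrightarrow> valid_basis (merge_last ns, bs @ [y + 1])"
    "c = 1 \<Longrightarrow> valid_basis (merge_last ns, bs @ [y])"
    using pos len merged is_split by (auto simp: valid_basis_def)
  moreover have "valid_basis ([sum_list ns], [1])"
    using pos(2) ns2 by (cases ns) (auto simp: valid_basis_def)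
  ultimately show ?thesis
    unfolding is_split N_basis_snoc2 by (auto intro!: filt_diff filt_bv)
qed (simp add: N_basis_short F1_filt_def)

theorem NF_filt:
  assumes "x \<in> (F1_filt q :: 'k::comm_ring_1 F1 set)"
  shows "NF x \<in> F1_filt (q - 1)"
proof -
  have "NF (bv b) \<in> (F1_filt (q - 1) :: 'k F1 set)" if "b \<in> Poly_Mapping.keys x" for b
  proof -
    obtain ns "is" where b_eq: "b = (ns, is)" by fastforce
    have valid: "valid_basis (ns, is)" and "length is \<le> q"
      using assms that by (auto simp: F1_filt_def b_eq)
    then have "F1_filt (length is - 1) \<subseteq> (F1_filt (q - 1) :: 'k F1 set)"
      by (intro filt_mono) simp
    moreover have "NF (bv b) = (N_basis ns is :: 'k F1)"
      using valid by (simp add: b_eq valid_basis_def NF_bv)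
    moreover have "N_basis ns is \<in> (F1_filt (length is - 1) :: 'k F1 set)"
      by (rule N_basis_filt[OF valid])
    ultimately show ?thesis by auto
  qed
  then show ?thesis
    by (subst k_linear_expand[OF k_linear_NF]) (auto intro!: filt_sum filt_smult)
qed

text \<open>On a generator all left labels are 1.\<close>

lemma NF_gen:
  assumes "is \<noteq> []" "\<forall>i\<in>set is. 1 \<le> i"
  shows "NF (gen is) = (N_basis (replicate (sum_list is) 1) is :: 'k::comm_ring_1 F1)"
  using assms by (simp add: gen_def NF_bv)

lemma lact_gen:
  assumes "length ls = sum_list is"
  shows "lact ls (gen is) = (bv (ls, is) :: 'k::comm_ring_1 F1)"
  using assms block_sums_ones[of ls] by (simp add: gen_def lact_bv arity_def)

text \<open>A basis vector whose left labels are 1, ..., 1, 2 is (1^(m) (x) m) applied to a generator.\<close>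

lemma merge_last_gen:
  assumes "sum_list is = Suc m"
  shows "bv (merge_last (replicate (Suc (Suc m)) 1), is) = (lact (replicate m 1 @ [2]) (gen is) :: 'k::comm_ring_1 F1)"
proof -
  have "merge_last (replicate (Suc (Suc m)) (1::nat)) = replicate m 1 @ [2]"
    using merge_last_ones[of "Suc (Suc m)"] by simp
  then show ?thesis
    using assms by (simp add: lact_gen)
qed

lemma NF_gen_vanishes:
  assumes "is \<noteq> []" "\<forall>i\<in>set is. 1 \<le> i" "length is < 2 \<or> 2 < last is"
  shows "NF (gen is) = (0 :: 'k::comm_ring_1 F1)"
proof (cases "length is < 2")
  case False
  then obtain bs y c where "is = bs @ [y, c]" using split_last_two by blast
  then show ?thesis using assms by (simp add: NF_gen N_basis_snoc2)
qed (use assms in \<open>simp add: NF_gen N_basis_short\<close>)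

lemma NF_gen_last_two:
  assumes "js \<noteq> []" "\<forall>i\<in>set js. 1 \<le> i"
  shows "NF (gen (js @ [2])) =
    (lact (replicate (sum_list js) 1 @ [2]) (gen (butlast js @ [last js + 1])) :: 'k::comm_ring_1 F1)"
proof -
  obtain ys y where js: "js = ys @ [y]" using assms(1) by (cases js rule: rev_exhaust) auto
  have "NF (gen (js @ [2])) = (bv (merge_last (replicate (Suc (Suc (sum_list js))) 1), ys @ [y + 1]) :: 'k F1)"
    using assms by (simp add: NF_gen js N_basis_snoc2)
  then show ?thesis
    using merge_last_gen[of "ys @ [y + 1]" "sum_list js"] by (simp add: js)
qed

lemma NF_gen_last_one:
  assumes "\<forall>i\<in>set js. 1 \<le> i" "1 \<le> a"
  shows "NF (gen (js @ [a, 1])) =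
    (lact (replicate (sum_list js + a - 1) 1 @ [2]) (gen (js @ [a]))
      - (if \<forall>i\<in>set (js @ [a]). i = 1 then bv ([sum_list js + a + 1], [1]) else 0) :: 'k::comm_ring_1 F1)"
proof -
  obtain a' where a': "a = Suc a'" using assms(2) by (cases a) auto
  have "bv (merge_last (replicate (Suc (Suc (sum_list js + a'))) 1), js @ [a])
      = (lact (replicate (sum_list js + a') 1 @ [2]) (gen (js @ [a])) :: 'k F1)"
    by (rule merge_last_gen) (simp add: a')
  then show ?thesis
    using assms by (simp add: NF_gen N_basis_snoc2 a')
qed

theorem mainTheorem6:
  shows "(\<forall>ls (x :: 'k::comm_ring_1 F1). (\<forall>l\<in>set ls. 1 \<le> l) \<and> in_F1 x
            \<and> (\<forall>b\<in>Poly_Mapping.keys x. arity b = length ls) \<longrightarrow> NF (lact ls x) = lact ls (NF x))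
    \<and> (\<forall>n\<ge>1. NF (gen [n]) = (0 :: 'k F1))
    \<and> (\<forall>is. (\<forall>i\<in>set is. 1 \<le> i) \<and> 1 < length is \<and> 2 < last is
            \<longrightarrow> NF (gen is) = (0 :: 'k F1))
    \<and> (\<forall>js. js \<noteq> [] \<and> (\<forall>i\<in>set js. 1 \<le> i) \<longrightarrow>
            NF (gen (js @ [2])) =
              (lact (replicate (sum_list js) 1 @ [2]) (gen (butlast js @ [last js + 1])) :: 'k F1))
    \<and> (\<forall>js a. (\<forall>i\<in>set js. 1 \<le> i) \<and> 1 < a \<longrightarrow>
            NF (gen (js @ [a, 1])) =
              (lact (replicate (sum_list js + a - 1) 1 @ [2]) (gen (js @ [a])) :: 'k F1))
    \<and> (\<forall>js. (\<forall>i\<in>set js. 1 \<le> i) \<and> (\<exists>i\<in>set js. i \<noteq> 1) \<longrightarrow>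
            NF (gen (js @ [1, 1])) =
              (lact (replicate (sum_list js) 1 @ [2]) (gen (js @ [1])) :: 'k F1))
    \<and> (\<forall>k\<ge>2. NF (gen (replicate k 1)) =
              (lact (replicate (k - 2) 1 @ [2]) (gen (replicate (k - 1) 1)) - bv ([k], [1]) :: 'k F1))
    \<and> (\<forall>q\<ge>1. \<forall>x\<in>(F1_filt q :: 'k F1 set). NF x \<in> F1_filt (q - 1))"
proof (intro conjI allI impI ballI, goal_cases)
  case (1 ls x)
  then show ?case by (simp add: NF_lact)
next
  case (2 n)
  then show ?case by (simp add: NF_gen_vanishes)
next
  case (3 "is")
  then show ?case by (auto intro: NF_gen_vanishes)
next
  case (4 js)
  then show ?case by (simp add: NF_gen_last_two)
next
  case (5 js a)
  then show ?case using NF_gen_last_one[of js a] by simp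
next
  case (6 js)
  then have not_all_ones: "\<not> (\<forall>i\<in>set (js @ [1]). i = 1)" by auto
  show ?case using 6 NF_gen_last_one[of js 1, unfolded if_not_P[OF not_all_ones]] by simp
next
  case (7 k)
  then obtain m where k: "k = Suc (Suc m)" by (metis add_2_eq_Suc le_Suc_ex)
  have ones: "replicate k (1::nat) = replicate m 1 @ [1, 1]" "replicate (k - 1) (1::nat) = replicate m 1 @ [1]"
    by (simp_all add: k replicate_append_same[symmetric])
  show ?case unfolding ones using NF_gen_last_one[of "replicate m 1" 1] k by simp
next
  case (8 q x)
  then show ?case by (blast intro: NF_filt)
qed

end
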